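(* Let $\Omega \subset \mathbb{R}^N$ be open and bounded, $\alpha \in (0,N)$, $\beta \in (0,N]$, and $p=N/\alpha$, $p'=\frac{N}{N-\alpha}$. There exist constants $c',C'>0$, depending only on $\alpha$, $N$, $\beta$ and $\Omega$, such that \[ \int_\Omega \exp\left(c'|I_\alpha f |^{p^\prime} \right)d\mathcal{H}_\infty^{\beta} \leq C' \] for all $f \in L^{N/\alpha}(\Omega)$ with $\|f\|_{L^{N/\alpha}(\Omega)}\leq 1$.
   Context: For $\alpha\in(0,N)$ the Riesz potential is $I_\alpha f(x) = \frac{1}{\gamma(\alpha)}\int_{\mathbb{R}^N} \frac{f(y)}{|x-y|^{N-\alpha}}\,dy$ with $\gamma(\alpha)=\pi^{N/2}2^{\alpha}\Gamma(\alpha/2)\Gamma((N-\alpha)/2)^{-1}$; a function defined on $\Omega$ is extended by zero outside $\Omega$. The Hausdorff content is $\mathcal{H}_{\infty}^{\beta}(E):=\inf\{\sum_{i} \omega_{\beta} r_i^{\beta}:E\subset \bigcup_{i} B(x_i,r_i)\}$ (countable coverings by balls of arbitrary radii), $\omega_{\beta} = \pi^{\beta/2}/\Gamma(\frac{\beta}{2}+1)$. For a nonnegative function $g$ on $\Omega$, the integral with respect to $\mathcal{H}^\beta_\infty$ is the Choquet integral $\int_\Omega g\,d\mathcal{H}^\beta_\infty := \int_0^\infty \mathcal{H}^\beta_\infty(\{x\in\Omega: g(x)>t\})\,dt$. *)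

theory Defs
  imports "HOL-Analysis.Analysis"
begin

definition riesz_gamma :: "nat \<Rightarrow> real \<Rightarrow> real" where
  "riesz_gamma N \<alpha> = pi powr (real N / 2) * 2 powr \<alpha> * Gamma (\<alpha> / 2) / Gamma ((real N - \<alpha>) / 2)"

definition riesz_potential :: "real \<Rightarrow> ('a::euclidean_space \<Rightarrow> real) \<Rightarrow> 'a \<Rightarrow> real" where
  "riesz_potential \<alpha> f x =
     (1 / riesz_gamma DIM('a) \<alpha>) *
     (\<integral> y. f y / norm (x - y) powr (real DIM('a) - \<alpha>) \<partial>lebesgue)"

definition riesz_potential_on :: "real \<Rightarrow> 'a::euclidean_space set \<Rightarrow> ('a \<Rightarrow> real) \<Rightarrow> 'a \<Rightarrow> real" where
  "riesz_potential_on \<alpha> \<Omega> f = riesz_potential \<alpha> (\<lambda>y. if y \<in> \<Omega> then f y else 0)"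

definition omega_const :: "real \<Rightarrow> real" where
  "omega_const \<beta> = pi powr (\<beta> / 2) / Gamma (\<beta> / 2 + 1)"

definition hausdorff_content :: "real \<Rightarrow> 'a::euclidean_space set \<Rightarrow> ennreal" where
  "hausdorff_content \<beta> E =
     Inf {(\<Sum>i. ennreal (omega_const \<beta> * r i powr \<beta>)) | (c :: nat \<Rightarrow> 'a) (r :: nat \<Rightarrow> real).
            (\<forall>i. r i > 0) \<and> E \<subseteq> (\<Union>i. ball (c i) (r i))}"

definition choquet_integral :: "real \<Rightarrow> 'a::euclidean_space set \<Rightarrow> ('a \<Rightarrow> real) \<Rightarrow> ennreal" where
  "choquet_integral \<beta> \<Omega> g =
     (\<integral>\<^sup>+ t \<in> {0..}. hausdorff_content \<beta> {x \<in> \<Omega>. g x > t} \<partial>lborel)"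

end

theory Submission
  imports Defs
begin

(* Let g be |f| extended by zero and nu the measure g^p dx, of total mass at most 1. Around a
   point x, split the Riesz integral into dyadic annuli; by Hoelder's inequality the annulus at
   distance about 2^-j rho contributes at most C nu(annulus)^(1/p). Call x heavy at scale n if
   nu(B(x,r)) > (r / R_n)^beta for some r <= R_n = 2 rho / 2^n. Away from the heavy points the
   annuli beyond n decay geometrically, and the first n annuli contribute at most C n^(1/q) by the
   discrete Hoelder inequality, so |I_alpha f(x)| <= A (n+1)^(1/q). By the Vitali covering lemma
   the heavy points have beta-content at most D 2^(-beta n). Hence the level sets of |I_alpha f|
   have exponentially small content, which makes the Choquet integral of exp (c |I_alpha f|^q)
   finite for small c. *)

section \<open>Hoelder's inequality\<close>

lemma Youngs_inequality_scaled:
  fixes p q \<mu> x :: real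
  assumes pq: "p > 1" "q > 1" "1/p + 1/q = 1" and \<mu>: "\<mu> > 0" and x: "x \<ge> 0"
  shows "x \<le> \<mu> powr p / p * x powr p + \<mu> powr (-q) / q"
proof -
  have "(\<mu> * x) * (1/\<mu>) \<le> (\<mu> * x) powr p / p + (1/\<mu>) powr q / q"
    by (rule Youngs_inequality) (use pq \<mu> x in auto)
  then show ?thesis
    using \<mu> x by (simp add: powr_mult powr_minus_divide powr_divide)
qed

lemma Youngs_inequality_optimal:
  fixes p q a m :: real
  assumes pq: "p > 1" "q > 1" "1/p + 1/q = 1" and a: "a > 0" and m: "m > 0"
  obtains \<mu> where "\<mu> > 0" "\<mu> powr p * a / p + \<mu> powr (-q) * m / q = a powr (1/p) * m powr (1/q)"
proof
  define \<mu> where "\<mu> = (m / a) powr (1/(p+q))"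
  show "\<mu> > 0" using a m by (simp add: \<mu>_def)
  have e1: "p / (p + q) = 1/q" and e2: "q / (p + q) = 1/p"
    using pq by (simp_all add: field_simps)
  have c1: "-(1/q) + 1 = 1/p" and c2: "-(1/p) + 1 = 1/q" using pq(3) by linarith+
  have "\<mu> powr p * a = m powr (1/q) * (a powr (-(1/q)) * a powr 1)"
    using a m by (simp add: \<mu>_def powr_powr e1 powr_divide powr_minus_divide)
  also have "a powr (-(1/q)) * a powr 1 = a powr (1/p)"
    by (simp only: c1 c2 flip: powr_add)
  finally have t1: "\<mu> powr p * a = a powr (1/p) * m powr (1/q)" by simp
  have "\<mu> powr (-q) * m = a powr (1/p) * (m powr (-(1/p)) * m powr 1)"
    using a m by (simp add: \<mu>_def powr_powr e2 powr_divide powr_minus_divide)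
  also have "m powr (-(1/p)) * m powr 1 = m powr (1/q)"
    by (simp only: c1 c2 flip: powr_add)
  finally have t2: "\<mu> powr (-q) * m = a powr (1/p) * m powr (1/q)" by simp
  have "\<mu> powr p * a / p + \<mu> powr (-q) * m / q = a powr (1/p) * m powr (1/q) * (1/p + 1/q)"
    unfolding t1 t2 by (simp add: distrib_left)
  then show "\<mu> powr p * a / p + \<mu> powr (-q) * m / q = a powr (1/p) * m powr (1/q)"
    using pq(3) by simp
qed

lemma nn_integral_indicator_Hoelder:
  fixes h :: "'a \<Rightarrow> real" and p q a m :: real
  assumes pq: "p > 1" "q > 1" "1/p + 1/q = 1"
    and h: "h \<in> borel_measurable M" "\<And>y. h y \<ge> 0" and A: "A \<in> sets M"
    and a: "(\<integral>\<^sup>+ y. ennreal (h y powr p) * indicator A y \<partial>M) \<le> ennreal a"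
    and m: "emeasure M A \<le> ennreal m"
  shows "(\<integral>\<^sup>+ y. ennreal (h y) * indicator A y \<partial>M) \<le> ennreal (a powr (1/p) * m powr (1/q))"
proof (cases "a > 0 \<and> m > 0")
  case False
  have "(\<integral>\<^sup>+ y. ennreal (h y) * indicator A y \<partial>M) = 0"
  proof (cases "m > 0")
    case True
    with False have "ennreal a = 0" by (intro ennreal_neg) auto
    with a have "(\<integral>\<^sup>+ y. ennreal (h y powr p) * indicator A y \<partial>M) = 0" by simp
    then have "AE y in M. ennreal (h y powr p) * indicator A y = 0"
      using h(1) A by (subst (asm) nn_integral_0_iff_AE) auto
    then have "AE y in M. ennreal (h y) * indicator A y = 0"
      by eventually_elim (use h(2) in \<open>auto simp: indicator_def ennreal_eq_0_iff\<close>)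
    then show ?thesis
      using h A by (subst nn_integral_0_iff_AE) auto
  next
    case False
    then have "ennreal m = 0" by (intro ennreal_neg) auto
    with m A have "A \<in> null_sets M" by (simp add: null_sets_def)
    then show ?thesis by (rule nn_integral_null_set)
  qed
  then show ?thesis by simp
next
  case True
  then obtain \<mu> where \<mu>: "\<mu> > 0"
    and opt: "\<mu> powr p * a / p + \<mu> powr (-q) * m / q = a powr (1/p) * m powr (1/q)"
    using Youngs_inequality_optimal[OF pq] by blast
  define s t where "s = \<mu> powr p / p" and "t = \<mu> powr (-q) / q"
  have st: "s \<ge> 0" "t \<ge> 0" using pq by (auto simp: s_def t_def)
  have Young: "h y \<le> s * h y powr p + t" for y
    unfolding s_def t_def using Youngs_inequality_scaled[OF pq \<mu> h(2)] by simp
  have "(\<integral>\<^sup>+ y. ennreal (h y) * indicator A y \<partial>M)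
      \<le> (\<integral>\<^sup>+ y. ennreal s * (ennreal (h y powr p) * indicator A y) + ennreal t * indicator A y \<partial>M)"
    using Young st by (intro nn_integral_mono)
      (auto simp: indicator_def ennreal_mult[symmetric] ennreal_plus[symmetric] simp del: ennreal_plus)
  also have "\<dots> = ennreal s * (\<integral>\<^sup>+ y. ennreal (h y powr p) * indicator A y \<partial>M) + ennreal t * emeasure M A"
    using h A by (simp add: nn_integral_add nn_integral_cmult)
  also have "\<dots> \<le> ennreal s * ennreal a + ennreal t * ennreal m"
    using a m by (intro add_mono mult_left_mono) auto
  also have "\<dots> = ennreal (s * a + t * m)"
    using st True by (simp add: ennreal_mult)
  also have "s * a + t * m = a powr (1/p) * m powr (1/q)"
    using opt by (simp add: s_def t_def)
  finally show ?thesis .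
qed

lemma sum_powr_le_card_powr:
  fixes p q :: real and a :: "'i \<Rightarrow> real"
  assumes pq: "p > 1" "q > 1" "1/p + 1/q = 1" and J: "finite J"
    and a: "\<And>j. j \<in> J \<Longrightarrow> a j \<ge> 0" and sum: "(\<Sum>j\<in>J. a j) \<le> 1"
  shows "(\<Sum>j\<in>J. a j powr (1/p)) \<le> real (card J) powr (1/q)"
proof -
  have "(\<integral>\<^sup>+ j. ennreal ((a j powr (1/p)) powr p) * indicator J j \<partial>count_space J) = ennreal (\<Sum>j\<in>J. a j)"
    using J a pq by (simp add: nn_integral_count_space_finite powr_powr)
  then have "(\<integral>\<^sup>+ j. ennreal (a j powr (1/p)) * indicator J j \<partial>count_space J)
      \<le> ennreal (1 powr (1/p) * real (card J) powr (1/q))"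
    using sum J by (intro nn_integral_indicator_Hoelder[OF pq]) auto
  then show ?thesis
    using J by (simp add: nn_integral_count_space_finite)
qed

section \<open>Hausdorff content\<close>

lemma omega_const_pos: "\<beta> > 0 \<Longrightarrow> omega_const \<beta> > 0"
  unfolding omega_const_def by (simp add: Gamma_real_pos)

lemma hausdorff_content_mono: "E \<subseteq> F \<Longrightarrow> hausdorff_content \<beta> E \<le> hausdorff_content \<beta> F"
  unfolding hausdorff_content_def by (rule Inf_superset_mono) blast

lemma hausdorff_content_le_suminf:
  fixes c :: "nat \<Rightarrow> 'a::euclidean_space"
  assumes "\<And>i. r i > 0" "E \<subseteq> (\<Union>i. ball (c i) (r i))"
  shows "hausdorff_content \<beta> E \<le> (\<Sum>i. ennreal (omega_const \<beta> * r i powr \<beta>))"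
  unfolding hausdorff_content_def by (rule Inf_lower) (use assms in blast)

lemma hausdorff_content_le_countable_cover:
  fixes c :: "'i \<Rightarrow> 'a::euclidean_space"
  assumes I: "countable I" and r: "\<And>i. i \<in> I \<Longrightarrow> r i > 0" and \<beta>: "\<beta> > 0"
    and E: "E \<subseteq> (\<Union>i\<in>I. ball (c i) (r i))"
  shows "hausdorff_content \<beta> E \<le> (\<integral>\<^sup>+ i. ennreal (omega_const \<beta> * r i powr \<beta>) \<partial>count_space I)"
proof (rule ennreal_le_epsilon)
  fix e :: real assume e: "0 < e"
  define w where "w = omega_const \<beta>"
  have w: "w > 0" using omega_const_pos[OF \<beta>] by (simp add: w_def)
  define J where "J = to_nat_on I ` I"
  have bij: "bij_betw (to_nat_on I) I J"
    unfolding J_def using I by (simp add: bij_betw_imageI inj_on_to_nat_on)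
  \<comment> \<open>The content is defined by sequences of balls of positive radius: indices outside J get
      dummy balls of total content e.\<close>
  define pad where "pad n = (e / w * (1/2)^Suc n) powr (1/\<beta>)" for n :: nat
  define rr where "rr n = (if n \<in> J then r (from_nat_into I n) else pad n)" for n
  have rr: "rr n > 0" for n
    using I r e w by (auto simp: rr_def pad_def J_def from_nat_into_to_nat_on)
  have cover: "E \<subseteq> (\<Union>n. ball (c (from_nat_into I n)) (rr n))"
  proof
    fix x assume "x \<in> E"
    then obtain i where i: "i \<in> I" "x \<in> ball (c i) (r i)" using E by auto
    then have "x \<in> ball (c (from_nat_into I (to_nat_on I i))) (rr (to_nat_on I i))"
      using I by (simp add: rr_def J_def)
    then show "x \<in> (\<Union>n. ball (c (from_nat_into I n)) (rr n))" by blast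
  qed
  have "hausdorff_content \<beta> E \<le> (\<integral>\<^sup>+ n. ennreal (w * rr n powr \<beta>) \<partial>count_space UNIV)"
    using hausdorff_content_le_suminf[OF rr cover] by (simp add: w_def nn_integral_count_space_nat)
  also have "\<dots> \<le> (\<integral>\<^sup>+ n. ennreal (w * r (from_nat_into I n) powr \<beta>) * indicator J n
                    + ennreal (e * (1/2)^Suc n) \<partial>count_space UNIV)"
    using e w \<beta> by (intro nn_integral_mono) (auto simp: rr_def pad_def powr_powr indicator_def)
  also have "\<dots> = (\<integral>\<^sup>+ n. ennreal (w * r (from_nat_into I n) powr \<beta>) \<partial>count_space J)
                   + (\<integral>\<^sup>+ n. ennreal (e * (1/2)^Suc n) \<partial>count_space UNIV)"
    by (simp add: nn_integral_add nn_integral_count_space_indicator)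
  also have "(\<integral>\<^sup>+ n. ennreal (w * r (from_nat_into I n) powr \<beta>) \<partial>count_space J)
      = (\<integral>\<^sup>+ i. ennreal (w * r (from_nat_into I (to_nat_on I i)) powr \<beta>) \<partial>count_space I)"
    by (rule nn_integral_bij_count_space[OF bij, symmetric])
  also have "\<dots> = (\<integral>\<^sup>+ i. ennreal (w * r i powr \<beta>) \<partial>count_space I)"
    using I by (intro nn_integral_cong) simp
  also have "(\<integral>\<^sup>+ n. ennreal (e * (1/2)^Suc n) \<partial>count_space UNIV) = ennreal e"
  proof -
    have "(\<lambda>n. e * (1/2)^Suc n) sums e"
      using sums_mult[OF power_half_series, of e] by simp
    then show ?thesis
      using e by (simp add: nn_integral_count_space_nat suminf_ennreal2 sums_summable sums_unique[symmetric])
  qed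
  finally show "hausdorff_content \<beta> E
      \<le> (\<integral>\<^sup>+ i. ennreal (omega_const \<beta> * r i powr \<beta>) \<partial>count_space I) + ennreal e"
    by (simp add: w_def)
qed

lemma hausdorff_content_le_ball:
  fixes c :: "'a::euclidean_space"
  assumes "E \<subseteq> ball c R" "R > 0" "\<beta> > 0"
  shows "hausdorff_content \<beta> E \<le> ennreal (omega_const \<beta> * R powr \<beta>)"
  using hausdorff_content_le_countable_cover[of "{()}" "\<lambda>_. R" \<beta> E "\<lambda>_. c"] assms by simp

definition heavy_points :: "'a::euclidean_space measure \<Rightarrow> real \<Rightarrow> real \<Rightarrow> 'a set" where
  "heavy_points \<nu> \<beta> R = {x. \<exists>r. 0 < r \<and> r \<le> R \<and> ennreal ((r / R) powr \<beta>) < emeasure \<nu> (ball x r)}"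

lemma hausdorff_content_heavy_points:
  fixes \<nu> :: "'a::euclidean_space measure"
  assumes \<beta>: "\<beta> > 0" and R: "R > 0" and balls: "\<And>x r. ball x r \<in> sets \<nu>"
  shows "hausdorff_content \<beta> (heavy_points \<nu> \<beta> R)
           \<le> ennreal (omega_const \<beta> * (5 * R) powr \<beta>) * emeasure \<nu> (space \<nu>)"
proof -
  let ?H = "heavy_points \<nu> \<beta> R"
  have "\<forall>x\<in>?H. \<exists>r. 0 < r \<and> r \<le> R \<and> ennreal ((r / R) powr \<beta>) < emeasure \<nu> (ball x r)"
    unfolding heavy_points_def by blast
  then obtain r where r: "\<And>x. x \<in> ?H \<Longrightarrow>
      0 < r x \<and> r x \<le> R \<and> ennreal ((r x / R) powr \<beta>) < emeasure \<nu> (ball x (r x))"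
    by metis
  then have "?H \<subseteq> (\<Union>x\<in>?H. ball x (r x))" by force
  then obtain C where C: "countable C" "C \<subseteq> ?H"
    and disj: "pairwise (\<lambda>x y. disjnt (ball x (r x)) (ball y (r y))) C"
    and cover: "?H \<subseteq> (\<Union>x\<in>C. ball x (5 * r x))"
    using Vitali_covering_lemma_balls[where S="?H" and K="?H" and a="\<lambda>x. x" and r=r and B=R] r by auto
  define w where "w = omega_const \<beta> * (5 * R) powr \<beta>"
  have w: "w \<ge> 0" using omega_const_pos[OF \<beta>] by (simp add: w_def)
  have "hausdorff_content \<beta> ?H \<le> (\<integral>\<^sup>+ x. ennreal (omega_const \<beta> * (5 * r x) powr \<beta>) \<partial>count_space C)"
    using r C by (intro hausdorff_content_le_countable_cover[OF C(1) _ \<beta> cover]) auto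
  also have "\<dots> \<le> (\<integral>\<^sup>+ x. ennreal w * emeasure \<nu> (ball x (r x)) \<partial>count_space C)"
  proof (rule nn_integral_mono)
    fix x assume "x \<in> space (count_space C)"
    then have x: "x \<in> ?H" using C by auto
    have "omega_const \<beta> * (5 * r x) powr \<beta> = w * (r x / R) powr \<beta>"
      using r[OF x] R by (simp add: w_def powr_mult powr_divide)
    then have "ennreal (omega_const \<beta> * (5 * r x) powr \<beta>) = ennreal w * ennreal ((r x / R) powr \<beta>)"
      using w by (simp add: ennreal_mult)
    also have "\<dots> \<le> ennreal w * emeasure \<nu> (ball x (r x))"
      using r[OF x] by (intro mult_left_mono) auto
    finally show "ennreal (omega_const \<beta> * (5 * r x) powr \<beta>) \<le> ennreal w * emeasure \<nu> (ball x (r x))" .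
  qed
  also have "\<dots> = ennreal w * emeasure \<nu> (\<Union>x\<in>C. ball x (r x))"
    using disj by (simp add: nn_integral_cmult emeasure_UN_countable C(1) balls
        disjoint_family_on_def pairwise_def disjnt_def)
  also have "\<dots> \<le> ennreal w * emeasure \<nu> (space \<nu>)"
    by (intro mult_left_mono emeasure_space) simp
  finally show ?thesis by (simp add: w_def)
qed

section \<open>Choquet integrals with respect to Hausdorff content\<close>

lemma choquet_integral_le_quadratic_tail:
  fixes u :: "'a::euclidean_space \<Rightarrow> real"
  assumes T: "T > 0" and H: "H \<ge> 0" and K: "K \<ge> 0"
    and total: "hausdorff_content \<beta> \<Omega> \<le> ennreal H"
    and tail: "\<And>t. t \<ge> T \<Longrightarrow> hausdorff_content \<beta> {x \<in> \<Omega>. u x > t} \<le> ennreal (K * t powr (-2))"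
  shows "choquet_integral \<beta> \<Omega> u \<le> ennreal (H * T + K / T)"
proof -
  let ?S = "\<lambda>t. hausdorff_content \<beta> {x \<in> \<Omega>. u x > t}"
  have "choquet_integral \<beta> \<Omega> u = (\<integral>\<^sup>+ t. ?S t * indicator {0..} t \<partial>lborel)"
    by (simp add: choquet_integral_def)
  also have "\<dots> \<le> (\<integral>\<^sup>+ t. ennreal H * indicator {0..T} t + ennreal (K * t powr (-2)) * indicator {T..} t \<partial>lborel)"
  proof (rule nn_integral_mono)
    fix t :: real
    have "?S t \<le> ennreal H"
      by (rule order_trans[OF hausdorff_content_mono total]) auto
    then show "?S t * indicator {0..} t
        \<le> ennreal H * indicator {0..T} t + ennreal (K * t powr (-2)) * indicator {T..} t"
      using tail[of t] by (cases "t < 0" "t \<le> T" rule: bool.exhaust[case_product bool.exhaust])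
        (auto simp: add_increasing add_increasing2)
  qed
  also have "\<dots> = ennreal H * ennreal T + (\<integral>\<^sup>+ t. ennreal (K * t powr (-2)) * indicator {T..} t \<partial>lborel)"
    using T by (simp add: nn_integral_add nn_integral_cmult_indicator)
  also have "(\<integral>\<^sup>+ t. ennreal (K * t powr (-2)) * indicator {T..} t \<partial>lborel) = ennreal (K / T)"
  proof -
    have "((\<lambda>t. K * t powr (-2)) has_integral (K * (- (T powr (-2 + 1)) / (-2 + 1)))) {T..}"
      using T by (intro has_integral_mult_right has_integral_powr_to_inf) auto
    then have "((\<lambda>t. K * t powr (-2)) has_integral (K / T)) {T..}"
      using T by (simp add: powr_minus_divide)
    from nn_integral_has_integral_lebesgue'[OF _ this] show ?thesis
      using K T by auto
  qed
  also have "ennreal H * ennreal T + ennreal (K / T) = ennreal (H * T + K / T)"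
    using H T K by (simp add: ennreal_mult)
  finally show ?thesis .
qed

lemma less_exp_powr_level:
  fixes A q \<kappa> t y :: real
  assumes A: "A > 0" and q: "q > 0" and \<kappa>: "\<kappa> > 0" and t: "t > 0"
    and n: "real (Suc n) \<le> ln t / \<kappa>" and y: "y \<ge> 0"
    and level: "t < exp (\<kappa> / A powr q * y powr q)"
  shows "A * real (Suc n) powr (1/q) < y"
proof -
  have "ln t < \<kappa> / A powr q * y powr q"
    using t level by (metis exp_gt_zero ln_exp ln_less_cancel_iff)
  then have "ln t / \<kappa> * A powr q < y powr q"
    using \<kappa> A by (simp add: field_simps)
  then have "real (Suc n) * A powr q < y powr q"
    using n by (meson mult_right_mono powr_ge_zero order_le_less_trans)
  then have "(real (Suc n) * A powr q) powr (1/q) < (y powr q) powr (1/q)"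
    using q A by (intro powr_less_mono2) auto
  then show ?thesis
    using q A y by (simp add: powr_mult powr_powr mult.commute)
qed

lemma choquet_integral_exp_le:
  fixes u :: "'a::euclidean_space \<Rightarrow> real"
  assumes A: "A > 0" and q: "q > 0" and \<beta>: "\<beta> > 0" and D: "D \<ge> 0" and H: "H \<ge> 0"
    and level: "\<And>n. hausdorff_content \<beta> {x \<in> \<Omega>. A * real (Suc n) powr (1/q) < \<bar>u x\<bar>}
                        \<le> ennreal (D * 2 powr (- \<beta> * real n))"
    and total: "hausdorff_content \<beta> \<Omega> \<le> ennreal H"
  shows "choquet_integral \<beta> \<Omega> (\<lambda>x. exp (\<beta> * ln 2 / 2 / A powr q * \<bar>u x\<bar> powr q))
           \<le> ennreal (H * exp (\<beta> * ln 2 / 2) + D * 4 powr \<beta> / exp (\<beta> * ln 2 / 2))"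
proof (rule choquet_integral_le_quadratic_tail[OF exp_gt_zero H _ total])
  define \<kappa> where "\<kappa> = \<beta> * ln 2 / 2"
  have \<kappa>: "\<kappa> > 0" using \<beta> by (simp add: \<kappa>_def)
  show "D * 4 powr \<beta> \<ge> 0" using D by simp
  fix t assume t: "exp (\<beta> * ln 2 / 2) \<le> t"
  then have t_pos: "t > 0" using exp_gt_zero order_less_le_trans by blast
  \<comment> \<open>The level t of the exponential is compared with the level n of u, n + 1 \<le> ln t / \<kappa> < n + 2.\<close>
  define v where "v = ln t / \<kappa>"
  have "\<kappa> \<le> ln t" using ln_ge_iff[OF t_pos] t unfolding \<kappa>_def by blast
  then have v: "v \<ge> 1" using \<kappa> by (simp add: v_def)
  define n where "n = nat \<lfloor>v\<rfloor> - 1"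
  have n: "real (Suc n) \<le> v" "v - 2 \<le> real n"
    using v by (simp_all add: n_def of_nat_diff) linarith+
  have "{x \<in> \<Omega>. exp (\<kappa> / A powr q * \<bar>u x\<bar> powr q) > t}
      \<subseteq> {x \<in> \<Omega>. A * real (Suc n) powr (1/q) < \<bar>u x\<bar>}"
    using less_exp_powr_level[OF A q \<kappa> t_pos] n(1) by (auto simp: v_def)
  then have "hausdorff_content \<beta> {x \<in> \<Omega>. exp (\<kappa> / A powr q * \<bar>u x\<bar> powr q) > t}
      \<le> ennreal (D * 2 powr (- \<beta> * real n))"
    using hausdorff_content_mono level order_trans by blast
  also have "D * 2 powr (- \<beta> * real n) \<le> D * 4 powr \<beta> * t powr (-2)"
  proof -
    have "2 powr (- \<beta> * real n) \<le> 2 powr (- \<beta> * (v - 2))"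
      using n(2) \<beta> by (intro powr_mono) auto
    also have "\<dots> = 2 powr (2 * \<beta>) * 2 powr (- \<beta> * v)"
      by (simp add: powr_add[symmetric] algebra_simps)
    also have "2 powr (2 * \<beta>) = 4 powr \<beta>"
      by (simp add: powr_powr[symmetric])
    also have "2 powr (- \<beta> * v) = t powr (-2)"
    proof -
      have "- \<beta> * v * ln 2 = -2 * ln t"
        using \<beta> by (simp add: v_def \<kappa>_def field_simps)
      then show ?thesis using t_pos by (simp add: powr_def)
    qed
    finally show ?thesis using D by (simp add: mult.assoc mult_left_mono)
  qed
  finally show "hausdorff_content \<beta> {x \<in> \<Omega>. exp (\<beta> * ln 2 / 2 / A powr q * \<bar>u x\<bar> powr q) > t}
      \<le> ennreal (D * 4 powr \<beta> * t powr (-2))"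
    by (simp add: \<kappa>_def ennreal_leI)
qed

section \<open>Riesz potentials of normalised functions\<close>

lemma riesz_gamma_pos: "0 < \<alpha> \<Longrightarrow> \<alpha> < real N \<Longrightarrow> riesz_gamma N \<alpha> > 0"
  by (simp add: riesz_gamma_def)

lemma abs_riesz_potential_on_le:
  fixes f :: "'a::euclidean_space \<Rightarrow> real"
  assumes \<gamma>: "riesz_gamma DIM('a) \<alpha> > 0"
  shows "ennreal \<bar>riesz_potential_on \<alpha> \<Omega> f x\<bar>
     \<le> ennreal (1 / riesz_gamma DIM('a) \<alpha>) *
        (\<integral>\<^sup>+ y. ennreal ((if y \<in> \<Omega> then \<bar>f y\<bar> else 0) / norm (x - y) powr (real DIM('a) - \<alpha>)) \<partial>lebesgue)"
proof -
  define h where "h = (\<lambda>y. (if y \<in> \<Omega> then f y else 0) / norm (x - y) powr (real DIM('a) - \<alpha>))"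
  have u: "\<bar>riesz_potential_on \<alpha> \<Omega> f x\<bar> = (1 / riesz_gamma DIM('a) \<alpha>) * \<bar>integral\<^sup>L lebesgue h\<bar>"
    using \<gamma> by (simp add: riesz_potential_on_def riesz_potential_def h_def abs_mult)
  have "ennreal \<bar>riesz_potential_on \<alpha> \<Omega> f x\<bar>
      = ennreal (1 / riesz_gamma DIM('a) \<alpha>) * ennreal \<bar>integral\<^sup>L lebesgue h\<bar>"
    unfolding u by (rule ennreal_mult) (use \<gamma> in auto)
  also have "\<dots> \<le> ennreal (1 / riesz_gamma DIM('a) \<alpha>) * (\<integral>\<^sup>+ y. ennreal (norm (h y)) \<partial>lebesgue)"
    using integral_norm_bound_ennreal[of lebesgue h]
    by (cases "integrable lebesgue h") (auto simp: not_integrable_integral_eq intro: mult_left_mono)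
  also have "(\<integral>\<^sup>+ y. ennreal (norm (h y)) \<partial>lebesgue)
      = (\<integral>\<^sup>+ y. ennreal ((if y \<in> \<Omega> then \<bar>f y\<bar> else 0) / norm (x - y) powr (real DIM('a) - \<alpha>)) \<partial>lebesgue)"
    by (intro nn_integral_cong) (simp add: h_def abs_divide)
  finally show ?thesis .
qed

locale riesz_domain =
  fixes \<Omega> :: "'a::euclidean_space set" and \<rho> \<alpha> \<beta> :: real
  assumes diam_le: "\<And>x y. x \<in> \<Omega> \<Longrightarrow> y \<in> \<Omega> \<Longrightarrow> dist x y \<le> \<rho>"
    and \<rho>_pos: "\<rho> > 0"
    and \<alpha>: "0 < \<alpha>" "\<alpha> < real DIM('a)"
    and \<beta>_pos: "\<beta> > 0"
begin

definition p where "p = real DIM('a) / \<alpha>"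
definition q where "q = real DIM('a) / (real DIM('a) - \<alpha>)"

lemma conjugate_exponents: "p > 1" "q > 1" "1/p + 1/q = 1"
proof -
  show "p > 1" "q > 1" using \<alpha> by (simp_all add: p_def q_def less_divide_eq)
  have "1/p + 1/q = (\<alpha> + (real DIM('a) - \<alpha>)) / real DIM('a)"
    by (simp add: p_def q_def add_divide_distrib[symmetric])
  then show "1/p + 1/q = 1" by simp
qed

lemma dim_div_q: "real DIM('a) / q = real DIM('a) - \<alpha>"
  using \<alpha> by (simp add: q_def)

definition annulus :: "'a \<Rightarrow> nat \<Rightarrow> 'a set" where
  "annulus x j = cball x (\<rho> / 2^j) - cball x (\<rho> / 2^Suc j)"

lemma mem_annulus: "y \<in> annulus x j \<longleftrightarrow> \<rho> / 2^Suc j < dist x y \<and> dist x y \<le> \<rho> / 2^j"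
  by (auto simp: annulus_def)

lemma annulus_sets [measurable]: "annulus x j \<in> sets lebesgue"
  unfolding annulus_def by (intro sets.Diff fmeasurableD lmeasurable_cball)

lemma annulus_subset_ball: "annulus x j \<subseteq> ball x (2 * \<rho> / 2^j)"
  using \<rho>_pos by (auto simp: annulus_def dist_norm)

lemma disjoint_family_annulus: "disjoint_family (annulus x)"
proof -
  have "annulus x j \<inter> annulus x k = {}" if "j < k" for j k
  proof -
    have "\<rho> / 2^k \<le> \<rho> / 2^Suc j"
      using \<rho>_pos that by (intro divide_left_mono power_increasing) auto
    then show ?thesis by (auto simp: mem_annulus)
  qed
  then show ?thesis
    unfolding disjoint_family_on_def by (metis Int_commute linorder_neqE_nat)
qed

lemma annulus_cover:
  assumes "x \<in> \<Omega>" "y \<in> \<Omega>" "x \<noteq> y"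
  obtains j where "y \<in> annulus x j"
proof -
  have d: "0 < dist x y" "dist x y \<le> \<rho>" using assms diam_le by auto
  obtain n :: nat where "\<rho> / dist x y < 2^n" using real_arch_pow[of 2 "\<rho> / dist x y"] by auto
  then have ex: "\<exists>n::nat. \<rho> / 2^n < dist x y" using d by (auto simp: field_simps)
  define k where "k = (LEAST n::nat. \<rho> / 2^n < dist x y)"
  have k: "\<rho> / 2^k < dist x y" unfolding k_def by (rule LeastI_ex[OF ex])
  then obtain j where j: "k = Suc j" using d by (cases k) auto
  have "\<not> \<rho> / 2^j < dist x y"
    using not_less_Least[of j "\<lambda>n. \<rho> / 2^n < dist x y"] by (simp add: k_def[symmetric] j)
  with k j show ?thesis by (intro that[of j]) (simp add: mem_annulus)
qed

definition \<theta> where "\<theta> = (1/2) powr (\<beta> / p)"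

lemma \<theta>_bounds: "0 < \<theta>" "\<theta> < 1"
  using \<beta>_pos conjugate_exponents by (auto simp: \<theta>_def powr01_less_one)

definition annulus_const where
  "annulus_const = unit_ball_vol (real DIM('a)) powr (1/q) * 4 powr (real DIM('a) - \<alpha>)"

lemma annulus_const_eq:
  assumes r: "r > 0"
  shows "r powr (- (real DIM('a) - \<alpha>)) * (unit_ball_vol (real DIM('a)) * (4 * r) ^ DIM('a)) powr (1/q)
           = annulus_const"
proof -
  define e where "e = real DIM('a) - \<alpha>"
  have "((4 * r) ^ DIM('a)) powr (1/q) = ((4 * r) powr real DIM('a)) powr (1/q)"
    using r by (simp add: powr_realpow)
  also have "\<dots> = (4 * r) powr e"
    unfolding powr_powr using dim_div_q by (simp add: e_def)
  finally have "((4 * r) ^ DIM('a)) powr (1/q) = (4 * r) powr e" .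
  then have "r powr (-e) * (unit_ball_vol (real DIM('a)) * (4 * r) ^ DIM('a)) powr (1/q)
      = unit_ball_vol (real DIM('a)) powr (1/q) * 4 powr e"
    using r by (simp add: powr_mult powr_minus field_simps)
  then show ?thesis by (simp add: annulus_const_def e_def)
qed

definition level_const where "level_const = annulus_const * (1 + 1 / (1 - \<theta>))"

lemma level_const_pos: "level_const > 0"
proof -
  have "unit_ball_vol (real DIM('a)) \<noteq> 0"
    using unit_ball_vol_pos[of "real DIM('a)"] by linarith
  with \<theta>_bounds show ?thesis
    unfolding level_const_def annulus_const_def by (simp add: add_pos_pos)
qed

end

locale riesz_unit_function = riesz_domain \<Omega> \<rho> \<alpha> \<beta>
    for \<Omega> :: "'a::euclidean_space set" and \<rho> \<alpha> \<beta> :: real +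
  fixes f :: "'a \<Rightarrow> real"
  assumes \<Omega>_sets: "\<Omega> \<in> sets lebesgue"
    and f_meas: "f \<in> borel_measurable (lebesgue_on \<Omega>)"
    and f_norm: "(\<integral>\<^sup>+ x \<in> \<Omega>. ennreal (\<bar>f x\<bar> powr (real DIM('a) / \<alpha>)) \<partial>lebesgue) \<le> 1"
begin

definition g where "g y = (if y \<in> \<Omega> then \<bar>f y\<bar> else 0)" for y

lemma g_measurable [measurable]: "g \<in> borel_measurable lebesgue"
proof -
  have "(\<lambda>x. \<bar>f x\<bar>) \<in> borel_measurable (lebesgue_on \<Omega>)" using f_meas by measurable
  then show ?thesis
    using borel_measurable_if_I[OF _ \<Omega>_sets] by (simp add: g_def[abs_def])
qed

lemma g_nonneg: "g y \<ge> 0"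
  by (simp add: g_def)

definition \<nu> where "\<nu> = density lebesgue (\<lambda>y. ennreal (g y powr p))"

lemma sets_\<nu> [simp]: "sets \<nu> = sets lebesgue"
  by (simp add: \<nu>_def)

lemma emeasure_\<nu>:
  "A \<in> sets lebesgue \<Longrightarrow> emeasure \<nu> A = (\<integral>\<^sup>+ y. ennreal (g y powr p) * indicator A y \<partial>lebesgue)"
  unfolding \<nu>_def by (subst emeasure_density) (auto simp: mult.commute)

lemma emeasure_\<nu>_le_1: "emeasure \<nu> A \<le> 1"
proof -
  have "emeasure \<nu> A \<le> emeasure \<nu> (space \<nu>)" by (rule emeasure_space)
  also have "\<dots> = (\<integral>\<^sup>+ y. ennreal (g y powr p) \<partial>lebesgue)"
    using emeasure_\<nu>[of UNIV] by (simp add: \<nu>_def)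
  also have "\<dots> = (\<integral>\<^sup>+ x \<in> \<Omega>. ennreal (\<bar>f x\<bar> powr (real DIM('a) / \<alpha>)) \<partial>lebesgue)"
    by (intro nn_integral_cong) (simp add: g_def p_def indicator_def)
  finally show ?thesis using f_norm by simp
qed

interpretation \<nu>: finite_measure \<nu>
  by standard (use emeasure_\<nu>_le_1[of "space \<nu>"] in \<open>auto simp: top_unique\<close>)

definition integrand where
  "integrand x y = ennreal (g y / norm (x - y) powr (real DIM('a) - \<alpha>))"

lemma integrand_measurable [measurable]: "integrand x \<in> borel_measurable lebesgue"
proof -
  have "(\<lambda>y. norm (x - y) powr (real DIM('a) - \<alpha>)) \<in> borel_measurable lebesgue"
    by (intro measurable_completion) measurable
  then show ?thesis unfolding integrand_def by measurable
qed

lemma integrand_le_on_annulus: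
  assumes "y \<in> annulus x j"
  shows "integrand x y \<le> ennreal ((\<rho> / 2^Suc j) powr (- (real DIM('a) - \<alpha>)) * g y)"
proof -
  define e where "e = real DIM('a) - \<alpha>"
  define r where "r = \<rho> / 2^Suc j"
  have e: "e > 0" and r: "r > 0" using \<alpha> \<rho>_pos by (simp_all add: e_def r_def)
  have "r < norm (x - y)" using assms by (simp add: mem_annulus r_def dist_norm)
  then have "r powr e \<le> norm (x - y) powr e"
    using r e by (intro powr_mono2) auto
  then have "g y / norm (x - y) powr e \<le> g y / r powr e"
    using r \<open>r < norm (x - y)\<close> g_nonneg[of y] by (intro divide_left_mono mult_pos_pos) auto
  also have "\<dots> = r powr (-e) * g y"
    by (simp add: powr_minus divide_inverse)
  finally show ?thesis
    unfolding integrand_def e_def r_def by (rule ennreal_leI)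
qed

lemma annulus_integral_le:
  "(\<integral>\<^sup>+ y. integrand x y * indicator (annulus x j) y \<partial>lebesgue)
     \<le> ennreal (annulus_const * measure \<nu> (annulus x j) powr (1/p))"
proof -
  define r where "r = \<rho> / 2^Suc j"
  define c where "c = r powr (- (real DIM('a) - \<alpha>))"
  have r: "r > 0" using \<rho>_pos by (simp add: r_def)
  let ?A = "annulus x j"
  let ?M = "measure \<nu> ?A powr (1/p)"
  let ?W = "(unit_ball_vol (real DIM('a)) * (4 * r) ^ DIM('a)) powr (1/q)"
  have "integrand x y * indicator ?A y \<le> ennreal c * (ennreal (g y) * indicator ?A y)" for y
    using integrand_le_on_annulus[of y x j] g_nonneg[of y]
    by (cases "y \<in> ?A") (simp_all add: c_def r_def ennreal_mult)
  then have "(\<integral>\<^sup>+ y. integrand x y * indicator ?A y \<partial>lebesgue)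
      \<le> ennreal c * (\<integral>\<^sup>+ y. ennreal (g y) * indicator ?A y \<partial>lebesgue)"
    by (subst nn_integral_cmult[symmetric]) (auto intro: nn_integral_mono)
  also have "(\<integral>\<^sup>+ y. ennreal (g y) * indicator ?A y \<partial>lebesgue)
      \<le> ennreal (?M * ?W)"
  proof (rule nn_integral_indicator_Hoelder[OF conjugate_exponents g_measurable g_nonneg annulus_sets])
    show "(\<integral>\<^sup>+ y. ennreal (g y powr p) * indicator ?A y \<partial>lebesgue) \<le> ennreal (measure \<nu> ?A)"
      using \<nu>.emeasure_eq_measure[of ?A] by (simp add: emeasure_\<nu>)
    have "?A \<subseteq> ball x (4 * r)"
      using annulus_subset_ball by (simp add: r_def)
    then show "emeasure lebesgue ?A \<le> ennreal (unit_ball_vol (real DIM('a)) * (4 * r) ^ DIM('a))"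
      using emeasure_mono[of ?A "ball x (4 * r)" lebesgue] r by (simp add: emeasure_ball)
  qed
  also have "ennreal c * ennreal (?M * ?W) = ennreal (c * (?M * ?W))"
    by (rule ennreal_mult[symmetric]) (simp_all add: c_def)
  also have "c * (?M * ?W) = annulus_const * ?M"
    using annulus_const_eq[OF r] unfolding c_def by (metis mult.left_commute mult.commute)
  finally show ?thesis
    by (simp add: mult_left_mono)
qed

lemma potential_le_suminf_annuli:
  assumes x: "x \<in> \<Omega>"
  shows "(\<integral>\<^sup>+ y. integrand x y \<partial>lebesgue)
           \<le> (\<Sum>j. \<integral>\<^sup>+ y. integrand x y * indicator (annulus x j) y \<partial>lebesgue)"
proof -
  have "integrand x y \<le> (\<Sum>j. integrand x y * indicator (annulus x j) y)" for y
  proof (cases "y \<in> \<Omega> \<and> y \<noteq> x")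
    case True
    then obtain j where "y \<in> annulus x j" using annulus_cover[OF x] by metis
    then have "integrand x y = (\<Sum>i\<in>{j}. integrand x y * indicator (annulus x i) y)" by simp
    also have "\<dots> \<le> (\<Sum>i. integrand x y * indicator (annulus x i) y)"
      by (rule sum_le_suminf) auto
    finally show ?thesis .
  qed (auto simp: integrand_def g_def)
  then have "(\<integral>\<^sup>+ y. integrand x y \<partial>lebesgue)
      \<le> (\<integral>\<^sup>+ y. (\<Sum>j. integrand x y * indicator (annulus x j) y) \<partial>lebesgue)"
    by (rule nn_integral_mono)
  also have "\<dots> = (\<Sum>j. \<integral>\<^sup>+ y. integrand x y * indicator (annulus x j) y \<partial>lebesgue)"
    by (rule nn_integral_suminf) measurable
  finally show ?thesis .
qed

lemma sum_measure_annulus_le_1: "(\<Sum>j\<in>J. measure \<nu> (annulus x j)) \<le> 1"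
proof (cases "finite J")
  case True
  have "(\<Sum>j\<in>J. measure \<nu> (annulus x j)) = measure \<nu> (\<Union>j\<in>J. annulus x j)"
    using True disjoint_family_on_mono[OF _ disjoint_family_annulus]
    by (intro \<nu>.finite_measure_finite_Union[symmetric]) auto
  also have "\<dots> \<le> 1"
    using emeasure_\<nu>_le_1 by (simp add: \<nu>.emeasure_eq_measure)
  finally show ?thesis .
qed simp

lemma potential_le_if_annuli_decay:
  assumes x: "x \<in> \<Omega>" and decay: "\<And>j. n \<le> j \<Longrightarrow> measure \<nu> (annulus x j) \<le> (\<theta>^(j-n)) powr p"
  shows "(\<integral>\<^sup>+ y. integrand x y \<partial>lebesgue) \<le> ennreal (annulus_const * (real n powr (1/q) + 1/(1-\<theta>)))"
proof -
  define T where "T j = (\<integral>\<^sup>+ y. integrand x y * indicator (annulus x j) y \<partial>lebesgue)" for j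
  define a where "a j = annulus_const * measure \<nu> (annulus x j) powr (1/p)" for j
  have C: "annulus_const \<ge> 0" by (simp add: annulus_const_def)
  have head: "(\<Sum>j<n. a j) \<le> annulus_const * real n powr (1/q)"
    using sum_powr_le_card_powr[OF conjugate_exponents, of "{..<n}" "\<lambda>j. measure \<nu> (annulus x j)"]
      sum_measure_annulus_le_1 C
    by (simp add: a_def sum_distrib_left[symmetric] mult_left_mono)
  have tail: "a (i + n) \<le> annulus_const * \<theta>^i" for i
  proof -
    have "measure \<nu> (annulus x (i + n)) powr (1/p) \<le> ((\<theta>^i) powr p) powr (1/p)"
      using decay[of "i + n"] conjugate_exponents by (intro powr_mono2) auto
    also have "\<dots> = \<theta>^i" using conjugate_exponents \<theta>_bounds by (simp add: powr_powr)
    finally show ?thesis using C by (simp add: a_def mult_left_mono)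
  qed
  have T: "T j \<le> ennreal (a j)" for j
    unfolding T_def a_def by (rule annulus_integral_le)
  have T_tail: "T (i + n) \<le> ennreal (annulus_const * \<theta>^i)" for i
    using T[of "i + n"] tail[of i] by (meson ennreal_leI order_trans)
  have geometric: "(\<Sum>i. ennreal (annulus_const * \<theta>^i)) = ennreal (annulus_const / (1 - \<theta>))"
  proof -
    have "(\<lambda>i. annulus_const * \<theta>^i) sums (annulus_const * (1 / (1 - \<theta>)))"
      using \<theta>_bounds by (intro sums_mult geometric_sums) simp
    then show ?thesis
      using C \<theta>_bounds by (simp add: suminf_ennreal2 sums_summable sums_unique[symmetric])
  qed
  have "(\<integral>\<^sup>+ y. integrand x y \<partial>lebesgue) \<le> (\<Sum>j. T j)"
    unfolding T_def by (rule potential_le_suminf_annuli[OF x])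
  also have "\<dots> = (\<Sum>i. T (i + n)) + (\<Sum>j<n. T j)"
    by (rule suminf_offset) simp
  also have "\<dots> \<le> (\<Sum>i. ennreal (annulus_const * \<theta>^i)) + (\<Sum>j<n. ennreal (a j))"
    using T T_tail by (intro add_mono suminf_le sum_mono) auto
  also have "\<dots> = ennreal (annulus_const / (1 - \<theta>) + (\<Sum>j<n. a j))"
    using C \<theta>_bounds unfolding geometric
    by (simp add: a_def sum_ennreal ennreal_plus[symmetric] sum_nonneg del: ennreal_plus)
  also have "\<dots> \<le> ennreal (annulus_const * (real n powr (1/q) + 1/(1-\<theta>)))"
    using head by (intro ennreal_leI) (simp add: algebra_simps)
  finally show ?thesis .
qed

lemma annuli_decay_outside_heavy_points:
  assumes x: "x \<notin> heavy_points \<nu> \<beta> (2 * \<rho> / 2^n)" and j: "n \<le> j"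
  shows "measure \<nu> (annulus x j) \<le> (\<theta>^(j-n)) powr p"
proof -
  have ratio: "(2 * \<rho> / 2^j) / (2 * \<rho> / 2^n) = (1/2)^(j-n)"
    using \<rho>_pos j by (simp add: power_diff power_one_over)
  have "2 * \<rho> / 2^j \<le> 2 * \<rho> / 2^n"
    using \<rho>_pos j by (intro divide_left_mono power_increasing) auto
  then have "\<not> ennreal (((2 * \<rho> / 2^j) / (2 * \<rho> / 2^n)) powr \<beta>) < emeasure \<nu> (ball x (2 * \<rho> / 2^j))"
    using x \<rho>_pos unfolding heavy_points_def by auto
  then have "emeasure \<nu> (ball x (2 * \<rho> / 2^j)) \<le> ennreal (((1/2)^(j-n)) powr \<beta>)"
    by (simp only: ratio not_less)
  then have "measure \<nu> (ball x (2 * \<rho> / 2^j)) \<le> ((1/2)^(j-n)) powr \<beta>"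
    by (simp add: \<nu>.emeasure_eq_measure)
  moreover have "measure \<nu> (annulus x j) \<le> measure \<nu> (ball x (2 * \<rho> / 2^j))"
    using annulus_subset_ball by (intro \<nu>.finite_measure_mono) auto
  moreover have "((1/2::real)^(j-n)) powr \<beta> = (\<theta>^(j-n)) powr p"
    using conjugate_exponents
    by (simp add: \<theta>_def powr_realpow[symmetric] powr_powr mult.commute)
  ultimately show ?thesis by simp
qed

lemma potential_le_outside_heavy_points:
  assumes x: "x \<in> \<Omega>" "x \<notin> heavy_points \<nu> \<beta> (2 * \<rho> / 2^n)"
  shows "(\<integral>\<^sup>+ y. integrand x y \<partial>lebesgue) \<le> ennreal (level_const * real (Suc n) powr (1/q))"
proof -
  have C: "annulus_const \<ge> 0" and \<theta>: "1 / (1 - \<theta>) \<ge> 0"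
    using \<theta>_bounds by (simp_all add: annulus_const_def)
  have "real n powr (1/q) \<le> real (Suc n) powr (1/q)" "1 \<le> real (Suc n) powr (1/q)"
    using conjugate_exponents by (auto intro: powr_mono2 ge_one_powr_ge_zero)
  then have "real n powr (1/q) + 1/(1-\<theta>) \<le> real (Suc n) powr (1/q) + 1/(1-\<theta>) * real (Suc n) powr (1/q)"
    using mult_left_mono[of 1 "real (Suc n) powr (1/q)" "1/(1-\<theta>)"] \<theta> by linarith
  then have "annulus_const * (real n powr (1/q) + 1/(1-\<theta>)) \<le> level_const * real (Suc n) powr (1/q)"
    using mult_left_mono[OF _ C] by (fastforce simp: level_const_def algebra_simps)
  then show ?thesis
    using potential_le_if_annuli_decay[OF x(1) annuli_decay_outside_heavy_points[OF x(2)]]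
    by (meson ennreal_leI order_trans)
qed

lemma riesz_potential_level_subset_heavy_points:
  "{x \<in> \<Omega>. level_const / riesz_gamma DIM('a) \<alpha> * real (Suc n) powr (1/q) < \<bar>riesz_potential_on \<alpha> \<Omega> f x\<bar>}
     \<subseteq> heavy_points \<nu> \<beta> (2 * \<rho> / 2^n)"
proof (rule subsetI, rule ccontr)
  define \<gamma> where "\<gamma> = riesz_gamma DIM('a) \<alpha>"
  have \<gamma>: "\<gamma> > 0" using riesz_gamma_pos \<alpha> by (simp add: \<gamma>_def)
  fix x assume x: "x \<in> {x \<in> \<Omega>. level_const / riesz_gamma DIM('a) \<alpha> * real (Suc n) powr (1/q)
                          < \<bar>riesz_potential_on \<alpha> \<Omega> f x\<bar>}"
    and light: "x \<notin> heavy_points \<nu> \<beta> (2 * \<rho> / 2^n)"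
  have "ennreal \<bar>riesz_potential_on \<alpha> \<Omega> f x\<bar> \<le> ennreal (1 / \<gamma>) * (\<integral>\<^sup>+ y. integrand x y \<partial>lebesgue)"
    using abs_riesz_potential_on_le[of \<alpha> \<Omega> f x] \<gamma> by (simp add: \<gamma>_def integrand_def g_def)
  also have "\<dots> \<le> ennreal (1 / \<gamma>) * ennreal (level_const * real (Suc n) powr (1/q))"
    using x light by (intro mult_left_mono potential_le_outside_heavy_points) auto
  also have "\<dots> = ennreal (level_const / \<gamma> * real (Suc n) powr (1/q))"
    using \<gamma> level_const_pos by (subst ennreal_mult[symmetric]) auto
  finally show False
    using x level_const_pos \<gamma> by (simp add: \<gamma>_def ennreal_le_iff)
qed

lemma hausdorff_content_riesz_potential_level:
  "hausdorff_content \<beta>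
     {x \<in> \<Omega>. level_const / riesz_gamma DIM('a) \<alpha> * real (Suc n) powr (1/q) < \<bar>riesz_potential_on \<alpha> \<Omega> f x\<bar>}
   \<le> ennreal (omega_const \<beta> * (10 * \<rho>) powr \<beta> * 2 powr (- \<beta> * real n))"
proof -
  have "(5 * (2 * \<rho> / 2^n)) powr \<beta> = (10 * \<rho> / 2 powr real n) powr \<beta>"
    by (simp add: powr_realpow)
  also have "\<dots> = (10 * \<rho>) powr \<beta> / (2 powr real n) powr \<beta>"
    using \<rho>_pos by (simp add: powr_divide)
  also have "\<dots> = (10 * \<rho>) powr \<beta> * 2 powr (- \<beta> * real n)"
    by (simp add: powr_powr powr_minus divide_inverse mult.commute)
  finally have radius: "(5 * (2 * \<rho> / 2^n)) powr \<beta> = (10 * \<rho>) powr \<beta> * 2 powr (- \<beta> * real n)" .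
  have "hausdorff_content \<beta> (heavy_points \<nu> \<beta> (2 * \<rho> / 2^n))
      \<le> ennreal (omega_const \<beta> * (5 * (2 * \<rho> / 2^n)) powr \<beta>) * emeasure \<nu> (space \<nu>)"
    using \<beta>_pos \<rho>_pos by (intro hausdorff_content_heavy_points) auto
  also have "\<dots> \<le> ennreal (omega_const \<beta> * (5 * (2 * \<rho> / 2^n)) powr \<beta>)"
    using mult_left_mono[OF emeasure_\<nu>_le_1] by simp
  finally show ?thesis
    unfolding radius mult.assoc
    by (rule order_trans[OF hausdorff_content_mono[OF riesz_potential_level_subset_heavy_points]])
qed

end

lemma (in riesz_domain) exp_riesz_potential_uniformly_integrable:
  assumes \<Omega>: "\<Omega> \<in> sets lebesgue" and H: "H \<ge> 0" and total: "hausdorff_content \<beta> \<Omega> \<le> ennreal H"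
  shows "\<exists>c' C'. c' > 0 \<and> C' > 0 \<and>
    (\<forall>f :: 'a \<Rightarrow> real.
       f \<in> borel_measurable (lebesgue_on \<Omega>) \<and>
       (\<integral>\<^sup>+ x \<in> \<Omega>. ennreal (\<bar>f x\<bar> powr (real DIM('a) / \<alpha>)) \<partial>lebesgue) \<le> 1 \<longrightarrow>
       choquet_integral \<beta> \<Omega>
         (\<lambda>x. exp (c' * \<bar>riesz_potential_on \<alpha> \<Omega> f x\<bar> powr (real DIM('a) / (real DIM('a) - \<alpha>))))
       \<le> ennreal C')"
proof -
  define A where "A = level_const / riesz_gamma DIM('a) \<alpha>"
  define D where "D = omega_const \<beta> * (10 * \<rho>) powr \<beta>"
  define \<kappa> where "\<kappa> = \<beta> * ln 2 / 2"
  have A: "A > 0" using level_const_pos riesz_gamma_pos \<alpha> by (simp add: A_def)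
  have D: "D \<ge> 0" using omega_const_pos[OF \<beta>_pos] by (simp add: D_def)
  show ?thesis
  proof (intro exI conjI allI impI)
    show "\<kappa> / A powr q > 0" "H * exp \<kappa> + D * 4 powr \<beta> / exp \<kappa> + 1 > 0"
      using A D H \<beta>_pos by (simp_all add: \<kappa>_def add_nonneg_pos)
    fix f :: "'a \<Rightarrow> real"
    assume "f \<in> borel_measurable (lebesgue_on \<Omega>) \<and>
      (\<integral>\<^sup>+ x \<in> \<Omega>. ennreal (\<bar>f x\<bar> powr (real DIM('a) / \<alpha>)) \<partial>lebesgue) \<le> 1"
    then interpret riesz_unit_function \<Omega> \<rho> \<alpha> \<beta> f
      using \<Omega> by unfold_locales auto
    have "hausdorff_content \<beta> {x \<in> \<Omega>. A * real (Suc n) powr (1/q) < \<bar>riesz_potential_on \<alpha> \<Omega> f x\<bar>}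
        \<le> ennreal (D * 2 powr (- \<beta> * real n))" for n
      unfolding A_def D_def by (rule hausdorff_content_riesz_potential_level)
    then have "choquet_integral \<beta> \<Omega> (\<lambda>x. exp (\<kappa> / A powr q * \<bar>riesz_potential_on \<alpha> \<Omega> f x\<bar> powr q))
        \<le> ennreal (H * exp \<kappa> + D * 4 powr \<beta> / exp \<kappa>)"
      unfolding \<kappa>_def using conjugate_exponents
      by (intro choquet_integral_exp_le[OF A _ \<beta>_pos D H _ total]) auto
    then show "choquet_integral \<beta> \<Omega> (\<lambda>x. exp (\<kappa> / A powr q * \<bar>riesz_potential_on \<alpha> \<Omega> f x\<bar>
        powr (real DIM('a) / (real DIM('a) - \<alpha>)))) \<le> ennreal (H * exp \<kappa> + D * 4 powr \<beta> / exp \<kappa> + 1)"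
      unfolding q_def by (rule order_trans) (simp add: ennreal_leI)
  qed
qed

theorem corollary1p4:
  fixes \<Omega> :: "'a::euclidean_space set" and \<alpha> \<beta> :: real
  assumes "open \<Omega>" and "bounded \<Omega>"
    and "0 < \<alpha>" and "\<alpha> < real DIM('a)"
    and "0 < \<beta>" and "\<beta> \<le> real DIM('a)"
  shows "\<exists>c' C'. c' > 0 \<and> C' > 0 \<and>
    (\<forall>f :: 'a \<Rightarrow> real.
       f \<in> borel_measurable (lebesgue_on \<Omega>) \<and>
       (\<integral>\<^sup>+ x \<in> \<Omega>. ennreal (\<bar>f x\<bar> powr (real DIM('a) / \<alpha>)) \<partial>lebesgue) \<le> 1 \<longrightarrow>
       choquet_integral \<beta> \<Omega>
         (\<lambda>x. exp (c' * \<bar>riesz_potential_on \<alpha> \<Omega> f x\<bar> powr (real DIM('a) / (real DIM('a) - \<alpha>))))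
       \<le> ennreal C')"
proof -
  obtain R where R: "R > 0" "\<Omega> \<subseteq> ball 0 R" using bounded_subset_ballD[OF assms(2)] by blast
  have "dist x y \<le> 2 * R" if "x \<in> \<Omega>" "y \<in> \<Omega>" for x y
  proof -
    have "dist 0 x < R" "dist 0 y < R" using that R(2) by auto
    then show ?thesis using dist_triangle2[of x y 0] by (simp add: dist_commute)
  qed
  then interpret riesz_domain \<Omega> "2 * R" \<alpha> \<beta>
    using R assms by unfold_locales auto
  show ?thesis
  proof (rule exp_riesz_potential_uniformly_integrable)
    show "\<Omega> \<in> sets lebesgue" using lmeasurable_open[OF assms(2,1)] by (rule fmeasurableD)
    show "hausdorff_content \<beta> \<Omega> \<le> ennreal (omega_const \<beta> * R powr \<beta>)"
      using hausdorff_content_le_ball[OF R(2,1) assms(5)] .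
    show "omega_const \<beta> * R powr \<beta> \<ge> 0"
      using omega_const_pos[OF assms(5)] by simp
  qed
qed

end
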